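(* Let $\mathcal{S}$ be a discrete state space and $\{X_n\}_{n\in\mathbb{N}_0}$ a Markov chain on $\mathcal{S}$ with transition matrix $H$ satisfying $H_{ii}=0$ for all $i$. For each $i\in\mathcal{S}$ let $p_i\in(0,1)$, $q_i=1-p_i$, $\lambda_i=p_i/q_i$. Let $Z,Z_1,Z_2,\dots$ be i.i.d. positive-integer-valued random variables. Let $\mathcal{Y}$ be a semi-Markov chain of type B: $\mathcal{Y}(t)=X_n$ for $T_n\le t<T_{n+1}$, $t\in\mathbb{N}_0$, with $T_0=0$, $T_n=\sum_{k=0}^{n-1}J_k$, where, conditionally on $X_k=i$, the waiting time has the law of $1+\sum_{j=1}^{M-1}Z_j$ with $M$ independent of the $Z_j$ and $P(M=r)=p_iq_i^{r-1}$, $r\in\mathbb{N}$; equivalently $\mathbb{E}(u^{J_k}\mid X_k=i)=\dfrac{p_iu}{1-q_i\mathbb{E}u^Z}$. Let $\gamma(t)=\inf\{k\in\mathbb{N}:\mathcal{Y}(t-k)\ne\mathcal{Y}(t)\}$, $\gamma(0)=1$, and $p_{ij}(t)=P(\mathcal{Y}(t)=j\mid\mathcal{Y}(0)=i,\gamma(0)=1)$ for $i,j\in\mathcal{S}$, $t\in\mathbb{N}_0$, with $p_{ij}(t)=0$ for $t<0$. Then, with $p_{ij}(0)=\delta_{ij}$, the functions $p_{ij}$ solve, for all $t\in\mathbb{N}_0$, $$\sum_{\tau=0}^\infty\bigl(p_{ij}(t)-p_{ij}(t-\tau)\bigr)P(Z=\tau)-P(Z>t)\,p_{ij}(0)=\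sum_{l\in\mathcal{S}}\lambda_i\bigl(H_{il}\,p_{lj}(t-1)-\delta_{il}\,p_{lj}(t)\bigr)+\lambda_i\,p_{ij}(0)\,\delta_{0t}.$$
   Context: $\delta$ denotes the Kronecker delta; $\mathbb{N}_0=\mathbb{N}\cup\{0\}$. The conditional law of $J_k$ given $X_k=i$ depends only on $i$. *)

theory Defs
  imports "HOL-Probability.Probability"
begin

fun sumZ :: "nat pmf \<Rightarrow> nat \<Rightarrow> nat pmf" where
  "sumZ Z 0 = return_pmf 0"
| "sumZ Z (Suc m) = bind_pmf Z (\<lambda>z. map_pmf (\<lambda>s. z + s) (sumZ Z m))"

text \<open>Conditional law of the waiting time J_k given X_k = i (type B):
  1 + sum_{j=1}^{M-1} Z_j with M independent of the Z_j and P(M = r) = p q^(r-1), r >= 1.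
  Here M - 1 is geometric_pmf p on {0,1,...}.\<close>
definition waitB :: "nat pmf \<Rightarrow> real \<Rightarrow> nat pmf" where
  "waitB Z p = bind_pmf (geometric_pmf p) (\<lambda>m. map_pmf Suc (sumZ Z m))"

text \<open>Joint law of (X_0,J_0),...,(X_n,J_n) of the embedded Markov chain with transition
  kernel H and waiting times, started with X_0 = i (a jump at time 0, i.e. gamma(0)=1).\<close>
fun traj :: "('s \<Rightarrow> 's pmf) \<Rightarrow> ('s \<Rightarrow> nat pmf) \<Rightarrow> 's \<Rightarrow> nat \<Rightarrow> ('s \<times> nat) list pmf" where
  "traj H W i 0 = map_pmf (\<lambda>w. [(i, w)]) (W i)"
| "traj H W i (Suc n) =
     bind_pmf (W i) (\<lambda>w. bind_pmf (H i) (\<lambda>l. map_pmf (\<lambda>xs. (i, w) # xs) (traj H W l n)))"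

text \<open>Value of the semi-Markov path Y(t) = X_n for T_n <= t < T_{n+1}, from a finite list of
  (state, waiting time) pairs; None if the list does not reach time t.\<close>
fun yval :: "('s \<times> nat) list \<Rightarrow> nat \<Rightarrow> 's option" where
  "yval [] t = None"
| "yval ((s, w) # xs) t = (if t < w then Some s else yval xs (t - w))"

text \<open>p_ij(t) = P(Y(t) = j | Y(0) = i, gamma(0) = 1) for t in N_0. Since all waiting times are
  >= 1, the first t+1 steps determine Y(t).\<close>
definition ptrans :: "('s \<Rightarrow> 's pmf) \<Rightarrow> ('s \<Rightarrow> nat pmf) \<Rightarrow> 's \<Rightarrow> 's \<Rightarrow> nat \<Rightarrow> real" where
  "ptrans H W i j t = measure_pmf.prob (traj H W i t) {xs. yval xs t = Some j}"

definition ptransZ :: "('s \<Rightarrow> 's pmf) \<Rightarrow> ('s \<Rightarrow> nat pmf) \<Rightarrow> 's \<Rightarrow> 's \<Rightarrow> int \<Rightarrow> real" where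
  "ptransZ H W i j t = (if t < 0 then 0 else ptrans H W i j (nat t))"

end

theory Submission
  imports Defs
begin

text \<open>Renewal at the first jump: \<open>Y\<close> stays at \<open>i\<close> during the waiting time \<open>J\<^sub>0\<close> and then
  restarts afresh from a state drawn from \<open>H i\<close>. For the type B law, \<open>J\<^sub>0 - 1\<close> is a geometric
  sum of copies of \<open>Z\<close>: with probability \<open>p\<^sub>i\<close> it is \<open>0\<close>, and otherwise it is \<open>Z\<close> plus an
  independent copy of itself. Conditioning on these two alternatives gives
  \<open>p\<^sub>i\<^sub>j(t) = p\<^sub>i (\<Sum>\<^sub>l H\<^sub>i\<^sub>l p\<^sub>l\<^sub>j(t-1) + \<delta>\<^sub>i\<^sub>j \<delta>\<^sub>0\<^sub>t) + q\<^sub>i (E p\<^sub>i\<^sub>j(t-Z) + \<delta>\<^sub>i\<^sub>j P(Z > t))\<close>,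
  and dividing by \<open>q\<^sub>i\<close> rearranges this into the stated equation.\<close>

lemma measure_pmf_prob_bind_pmf:
  "measure_pmf.prob (bind_pmf M N) A = measure_pmf.expectation M (\<lambda>x. measure_pmf.prob (N x) A)"
  unfolding measure_pmf_bind
  by (rule measure_pmf.measure_bind[where N="count_space UNIV"])
     (auto simp: measure_pmf_in_subprob_algebra)

lemma expectation_bind_pmf:
  fixes f :: "'b \<Rightarrow> real"
  assumes "\<And>y. \<bar>f y\<bar> \<le> B"
  shows "measure_pmf.expectation (bind_pmf M N) f
       = measure_pmf.expectation M (\<lambda>x. measure_pmf.expectation (N x) f)"
  unfolding measure_pmf_bind
  by (rule integral_bind[where K="count_space UNIV" and B'=1 and B=B])
     (auto simp: assms measure_pmf_in_subprob_algebra)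

lemma abs_expectation_pmf_le:
  fixes f :: "'a \<Rightarrow> real"
  assumes "\<And>x. \<bar>f x\<bar> \<le> B"
  shows "\<bar>measure_pmf.expectation M f\<bar> \<le> B"
proof -
  have "integrable M f"
    by (rule measure_pmf.integrable_const_bound[where B=B]) (use assms in auto)
  moreover have "- B \<le> f x" "f x \<le> B" for x
    using assms[of x] by auto
  ultimately show ?thesis
    using measure_pmf.integral_ge_const[of M f "- B"] measure_pmf.integral_le_const[of M f B]
    by auto
qed

lemma pmf_expectation_has_sum:
  fixes f :: "'a \<Rightarrow> real"
  assumes "\<And>x. \<bar>f x\<bar> \<le> B"
  shows "((\<lambda>x. pmf M x * f x) has_sum measure_pmf.expectation M f) UNIV"
proof -
  have "Infinite_Set_Sum.abs_summable_on (\<lambda>x. pmf M x * f x) UNIV"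
  proof (rule abs_summable_on_comparison_test)
    show "Infinite_Set_Sum.abs_summable_on (\<lambda>x. pmf M x * B) UNIV"
      by (intro abs_summable_on_cmult_left pmf_abs_summable)
    show "norm (pmf M x * f x) \<le> norm (pmf M x * B)" for x
    proof -
      have "\<bar>pmf M x * f x\<bar> = pmf M x * \<bar>f x\<bar>"
        by (simp add: abs_mult)
      also have "\<dots> \<le> pmf M x * B"
        by (rule mult_left_mono[OF assms pmf_nonneg])
      finally show ?thesis
        by simp
    qed
  qed
  note abs_summable = this
  have "measure_pmf.expectation M f = (\<Sum>\<^sub>\<infinity>x. pmf M x * f x)"
    unfolding pmf_expectation_eq_infsetsum by (rule infsetsum_infsum[OF abs_summable])
  moreover have "(\<lambda>x. pmf M x * f x) summable_on UNIV"
    by (rule abs_summable_summable)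
      (use abs_summable abs_summable_equivalent[of "\<lambda>x. pmf M x * f x" UNIV] in simp)
  ultimately show ?thesis
    by simp
qed

lemma suminf_pmf_const_minus:
  fixes f :: "nat \<Rightarrow> real"
  assumes "\<And>n. \<bar>f n\<bar> \<le> B"
  shows "(\<Sum>n. (c - f n) * pmf M n) = c - measure_pmf.expectation M f"
proof -
  have "(\<lambda>n. pmf M n * c - pmf M n * f n) sums (c - measure_pmf.expectation M f)"
    using sums_diff[OF has_sum_imp_sums[OF pmf_expectation_has_sum[of "\<lambda>_. c" "\<bar>c\<bar>" M]]
        has_sum_imp_sums[OF pmf_expectation_has_sum[OF assms]]]
    by simp
  then show ?thesis
    by (simp add: sums_iff algebra_simps)
qed

lemma infsum_pmf_minus_diagonal:
  fixes f g :: "'a \<Rightarrow> real"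
  assumes "\<And>x. \<bar>f x\<bar> \<le> B"
  shows "(\<Sum>\<^sub>\<infinity>x. c * (pmf M x * f x - (if a = x then 1 else 0) * g x))
       = c * (measure_pmf.expectation M f - g a)"
proof -
  have "((\<lambda>x. - ((if a = x then 1 else 0) * g x)) has_sum - g a) UNIV"
    by (rule has_sum_finite_neutralI[of "{a}"]) auto
  from has_sum_add[OF pmf_expectation_has_sum[OF assms] this]
  have "((\<lambda>x. pmf M x * f x - (if a = x then 1 else 0) * g x)
      has_sum (measure_pmf.expectation M f - g a)) UNIV"
    by simp
  then show ?thesis
    by (intro infsumI has_sum_cmult_right)
qed

lemma prob_yval_traj_0:
  "measure_pmf.prob (traj H W l 0) {xs. yval xs t = Some j}
   = measure_pmf.expectation (W l) (\<lambda>w. if t < w then of_bool (l = j) else 0)"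
  unfolding traj.simps map_pmf_def measure_pmf_prob_bind_pmf
  by (rule Bochner_Integration.integral_cong) auto

lemma prob_yval_traj_Suc:
  "measure_pmf.prob (traj H W l (Suc n)) {xs. yval xs t = Some j}
   = measure_pmf.expectation (W l) (\<lambda>w. if t < w then of_bool (l = j)
       else measure_pmf.expectation (H l)
              (\<lambda>l'. measure_pmf.prob (traj H W l' n) {xs. yval xs (t - w) = Some j}))"
  unfolding traj.simps measure_pmf_prob_bind_pmf
  by (rule Bochner_Integration.integral_cong) (auto simp: vimage_def)

lemma prob_yval_traj_Suc_eq:
  assumes W_pos: "\<And>k w. w \<in> set_pmf (W k) \<Longrightarrow> 0 < w" and "t \<le> n"
  shows "measure_pmf.prob (traj H W l (Suc n)) {xs. yval xs t = Some j}
       = measure_pmf.prob (traj H W l n) {xs. yval xs t = Some j}"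
  using \<open>t \<le> n\<close>
proof (induction n arbitrary: l t)
  case 0
  then show ?case
    unfolding prob_yval_traj_Suc prob_yval_traj_0
    by (intro integral_cong_AE) (auto simp: AE_measure_pmf_iff dest: W_pos)
next
  case (Suc n)
  show ?case
    unfolding prob_yval_traj_Suc[of H W l "Suc n"] prob_yval_traj_Suc[of H W l n]
    using Suc.prems
    by (intro integral_cong_AE)
       (auto simp: AE_measure_pmf_iff Suc.IH simp del: traj.simps dest!: W_pos
         intro!: Bochner_Integration.integral_cong)
qed

lemma prob_yval_traj_eq_ptrans:
  assumes W_pos: "\<And>k w. w \<in> set_pmf (W k) \<Longrightarrow> 0 < w" and "t \<le> n"
  shows "measure_pmf.prob (traj H W l n) {xs. yval xs t = Some j} = ptrans H W l j t"
  using \<open>t \<le> n\<close> unfolding ptrans_def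
  by (induction n rule: dec_induct) (simp_all add: prob_yval_traj_Suc_eq[OF W_pos] del: traj.simps)

lemma ptrans_renewal:
  assumes W_pos: "\<And>k w. w \<in> set_pmf (W k) \<Longrightarrow> 0 < w"
  shows "ptrans H W l j t = measure_pmf.expectation (W l) (\<lambda>w. if t < w then of_bool (l = j)
           else measure_pmf.expectation (H l) (\<lambda>l'. ptrans H W l' j (t - w)))"
proof -
  have restart: "measure_pmf.prob (traj H W l' t) {xs. yval xs (t - w) = Some j}
      = ptrans H W l' j (t - w)" for l' w
    by (rule prob_yval_traj_eq_ptrans) (use W_pos in auto)
  have "ptrans H W l j t = measure_pmf.prob (traj H W l (Suc t)) {xs. yval xs t = Some j}"
    by (rule prob_yval_traj_eq_ptrans[symmetric]) (use W_pos in auto)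
  also have "\<dots> = measure_pmf.expectation (W l) (\<lambda>w. if t < w then of_bool (l = j)
           else measure_pmf.expectation (H l) (\<lambda>l'. ptrans H W l' j (t - w)))"
    unfolding prob_yval_traj_Suc restart ..
  finally show ?thesis .
qed

lemma ptrans_0:
  assumes W_pos: "\<And>k w. w \<in> set_pmf (W k) \<Longrightarrow> 0 < w"
  shows "ptrans H W l j 0 = of_bool (l = j)"
proof -
  have "ptrans H W l j 0 = measure_pmf.expectation (W l) (\<lambda>w. if 0 < w then of_bool (l = j)
           else measure_pmf.expectation (H l) (\<lambda>l'. ptrans H W l' j (0 - w)))"
    by (rule ptrans_renewal[OF W_pos])
  also have "\<dots> = measure_pmf.expectation (W l) (\<lambda>_. of_bool (l = j))"
    by (rule integral_cong_AE) (auto simp: AE_measure_pmf_iff dest: W_pos)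
  finally show ?thesis
    by simp
qed

lemma abs_ptrans_le_1: "\<bar>ptrans H W l j t\<bar> \<le> 1"
  by (simp add: ptrans_def)

lemma abs_ptransZ_le_1: "\<bar>ptransZ H W l j t\<bar> \<le> 1"
  by (simp add: ptransZ_def abs_ptrans_le_1)

definition compound_geometric_pmf :: "nat pmf \<Rightarrow> real \<Rightarrow> nat pmf" where
  "compound_geometric_pmf Z p = bind_pmf (geometric_pmf p) (sumZ Z)"

lemma waitB_eq_map_Suc: "waitB Z p = map_pmf Suc (compound_geometric_pmf Z p)"
  unfolding waitB_def compound_geometric_pmf_def map_bind_pmf ..

lemma compound_geometric_pmf_unfold:
  assumes "p \<in> {0<..1}"
  shows "compound_geometric_pmf Z p = bind_pmf (bernoulli_pmf p) (\<lambda>b. if b then return_pmf 0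
           else bind_pmf Z (\<lambda>z. map_pmf ((+) z) (compound_geometric_pmf Z p)))"
proof -
  have step: "bind_pmf (map_pmf Suc (geometric_pmf p)) (sumZ Z)
      = bind_pmf Z (\<lambda>z. map_pmf ((+) z) (compound_geometric_pmf Z p))"
    unfolding compound_geometric_pmf_def map_bind_pmf bind_map_pmf sumZ.simps
    by (rule bind_commute_pmf)
  have first: "compound_geometric_pmf Z p = bind_pmf (bind_pmf (bernoulli_pmf p)
      (\<lambda>b. if b then return_pmf 0 else map_pmf Suc (geometric_pmf p))) (sumZ Z)"
    unfolding compound_geometric_pmf_def by (subst geometric_bind_pmf_unfold[OF assms]) (rule refl)
  show ?thesis
    by (subst first, unfold bind_assoc_pmf, rule bind_pmf_cong[OF refl])
       (simp add: step bind_return_pmf)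
qed

lemma expectation_compound_geometric_pmf:
  fixes f :: "nat \<Rightarrow> real"
  assumes "p \<in> {0<..1}" and "\<And>n. \<bar>f n\<bar> \<le> B"
  shows "measure_pmf.expectation (compound_geometric_pmf Z p) f
       = p * f 0 + (1 - p) * measure_pmf.expectation Z
           (\<lambda>z. measure_pmf.expectation (compound_geometric_pmf Z p) (\<lambda>k. f (z + k)))"
proof -
  let ?K = "compound_geometric_pmf Z p"
  have "measure_pmf.expectation ?K f = measure_pmf.expectation (bernoulli_pmf p) (\<lambda>b.
      measure_pmf.expectation (if b then return_pmf 0 else bind_pmf Z (\<lambda>z. map_pmf ((+) z) ?K)) f)"
    by (subst compound_geometric_pmf_unfold[OF assms(1)]) (rule expectation_bind_pmf[OF assms(2)])
  also have "\<dots> = p * f 0 + (1 - p) * measure_pmf.expectation (bind_pmf Z (\<lambda>z. map_pmf ((+) z) ?K)) f"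
    using assms(1) by (simp add: algebra_simps)
  also have "measure_pmf.expectation (bind_pmf Z (\<lambda>z. map_pmf ((+) z) ?K)) f
      = measure_pmf.expectation Z (\<lambda>z. measure_pmf.expectation ?K (\<lambda>k. f (z + k)))"
    by (simp add: expectation_bind_pmf[OF assms(2)])
  finally show ?thesis .
qed

lemma ptrans_waitB_renewal:
  assumes W_pos: "\<And>k w. w \<in> set_pmf (W k) \<Longrightarrow> 0 < w"
    and W_l: "W l = waitB Z q" and q: "q \<in> {0<..1}"
  shows "ptrans H W l j t
       = q * (if t = 0 then of_bool (l = j)
              else measure_pmf.expectation (H l) (\<lambda>l'. ptrans H W l' j (t - 1)))
         + (1 - q) * measure_pmf.expectation Z
              (\<lambda>z. if t \<le> z then of_bool (l = j) else ptrans H W l j (t - z))"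
proof -
  let ?K = "compound_geometric_pmf Z q"
  define h where "h u = measure_pmf.expectation (H l) (\<lambda>l'. ptrans H W l' j u)" for u
  \<comment> \<open>\<open>\<psi> (u - k)\<close> is the probability of \<open>Y(u) = j\<close> given that the first waiting time is \<open>k + 1\<close>.\<close>
  define \<psi> where "\<psi> n = (case n of 0 \<Rightarrow> of_bool (l = j) | Suc m \<Rightarrow> h m)" for n
  have \<psi>_bound: "\<bar>\<psi> n\<bar> \<le> 1" for n
    unfolding \<psi>_def h_def
    by (auto split: nat.split intro!: abs_expectation_pmf_le abs_ptrans_le_1)
  have \<psi>_diff: "(if u < Suc k then of_bool (l = j) else h (u - Suc k)) = \<psi> (u - k)" for u k
  proof (cases "u \<le> k")
    case False
    then have "u - k = Suc (u - Suc k)"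
      by arith
    with False show ?thesis
      by (simp add: \<psi>_def)
  qed (simp add: \<psi>_def)
  have ptrans_K: "ptrans H W l j u = measure_pmf.expectation ?K (\<lambda>k. \<psi> (u - k))" for u
  proof -
    have "ptrans H W l j u = measure_pmf.expectation (W l) (\<lambda>w. if u < w then of_bool (l = j)
        else measure_pmf.expectation (H l) (\<lambda>l'. ptrans H W l' j (u - w)))"
      by (rule ptrans_renewal[OF W_pos])
    then show ?thesis
      unfolding W_l waitB_eq_map_Suc integral_map_pmf \<psi>_diff[symmetric] h_def .
  qed
  have shift: "measure_pmf.expectation ?K (\<lambda>k. \<psi> (t - (z + k)))
      = (if t \<le> z then of_bool (l = j) else ptrans H W l j (t - z))" for z
  proof (cases "t \<le> z")
    case True
    then show ?thesis
      by (simp add: \<psi>_def)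
  next
    case False
    then show ?thesis
      using ptrans_K[of "t - z"] by simp
  qed
  have "ptrans H W l j t = measure_pmf.expectation ?K (\<lambda>k. \<psi> (t - k))"
    by (rule ptrans_K)
  also have "\<dots> = q * \<psi> t + (1 - q) * measure_pmf.expectation Z
      (\<lambda>z. measure_pmf.expectation ?K (\<lambda>k. \<psi> (t - (z + k))))"
    using expectation_compound_geometric_pmf[where f="\<lambda>k. \<psi> (t - k)", OF q \<psi>_bound] by simp
  finally show ?thesis
    unfolding shift by (cases t) (simp_all add: \<psi>_def h_def)
qed

lemma ptransZ_waitB_recursion:
  assumes W_pos: "\<And>k w. w \<in> set_pmf (W k) \<Longrightarrow> 0 < w"
    and W_l: "W l = waitB Z q" and q: "q \<in> {0<..1}"
  shows "ptransZ H W l j (int t)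
       = q * (measure_pmf.expectation (H l) (\<lambda>l'. ptransZ H W l' j (int t - 1))
              + of_bool (l = j) * (if t = 0 then 1 else 0))
         + (1 - q) * (measure_pmf.expectation Z (\<lambda>z. ptransZ H W l j (int t - int z))
                      + of_bool (l = j) * measure_pmf.prob Z {t<..})"
proof -
  have jump: "(if t = 0 then of_bool (l = j)
               else measure_pmf.expectation (H l) (\<lambda>l'. ptrans H W l' j (t - 1)))
      = measure_pmf.expectation (H l) (\<lambda>l'. ptransZ H W l' j (int t - 1))
        + of_bool (l = j) * (if t = 0 then 1 else 0)"
    by (cases t) (simp_all add: ptransZ_def)
  have stay: "(if t \<le> z then of_bool (l = j) else ptrans H W l j (t - z))
      = ptransZ H W l j (int t - int z) + of_bool (l = j) * indicator {t<..} z" for z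
    using ptrans_0[OF W_pos, where H=H and l=l and j=j]
    by (auto simp: ptransZ_def indicator_def nat_diff_distrib)
  have "measure_pmf.expectation Z (\<lambda>z. ptransZ H W l j (int t - int z)
          + of_bool (l = j) * indicator {t<..} z)
      = measure_pmf.expectation Z (\<lambda>z. ptransZ H W l j (int t - int z))
          + of_bool (l = j) * measure_pmf.prob Z {t<..}"
    by (subst Bochner_Integration.integral_add)
       (auto intro!: measure_pmf.integrable_const_bound[where B=1] simp: abs_ptransZ_le_1)
  then show ?thesis
    using ptrans_waitB_renewal[where W=W and H=H and j=j and t=t, OF W_pos W_l q]
    unfolding jump stay by (simp add: ptransZ_def)
qed

lemma rearrange_first_jump_equation:
  fixes q g h e a b d :: real
  assumes "q \<noteq> 1" and "g = q * (h + d * b) + (1 - q) * (e + d * a)"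
  shows "g - e - a * d = q / (1 - q) * (h - g) + q / (1 - q) * d * b"
proof -
  have "1 - q \<noteq> 0"
    using assms(1) by simp
  moreover have "(g - e - a * d) * (1 - q) = q * (h - g) + q * d * b"
    using assms(2) by algebra
  ultimately show ?thesis
    by (simp add: divide_simps)
qed

theorem mainTheorem6:
  fixes H :: "'s \<Rightarrow> 's pmf" and p :: "'s \<Rightarrow> real" and Z :: "nat pmf"
    and i j :: 's and t :: nat
  assumes noself: "\<And>i. pmf (H i) i = 0"
    and p_range: "\<And>i. 0 < p i \<and> p i < 1"
    and Z_pos: "set_pmf Z \<subseteq> {1..}"
  defines "lam \<equiv> \<lambda>i. p i / (1 - p i)"
    and "P \<equiv> ptransZ H (\<lambda>k. waitB Z (p k))"
  shows "(\<Sum>\<tau>. (P i j (int t) - P i j (int t - int \<tau>)) * pmf Z \<tau>)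
           - measure_pmf.prob Z {t<..} * P i j 0
         = (\<Sum>\<^sub>\<infinity>l. lam i * (pmf (H i) l * P l j (int t - 1)
                              - (if i = l then 1 else 0) * P l j (int t)))
           + lam i * P i j 0 * (if t = 0 then 1 else 0)"
proof -
  define W where "W = (\<lambda>k. waitB Z (p k))"
  have W_pos: "\<And>k w. w \<in> set_pmf (W k) \<Longrightarrow> 0 < w"
    by (auto simp: W_def waitB_eq_map_Suc)
  have P_eq: "P = ptransZ H W"
    by (simp add: P_def W_def)
  let ?h = "measure_pmf.expectation (H i) (\<lambda>l. P l j (int t - 1))"
  let ?E = "measure_pmf.expectation Z (\<lambda>\<tau>. P i j (int t - int \<tau>))"
  have P0: "P i j 0 = of_bool (i = j)"
    using ptrans_0[where W=W, OF W_pos] by (simp add: P_eq ptransZ_def)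
  have rec: "P i j (int t) = p i * (?h + of_bool (i = j) * (if t = 0 then 1 else 0))
      + (1 - p i) * (?E + of_bool (i = j) * measure_pmf.prob Z {t<..})"
    unfolding P_eq
    by (rule ptransZ_waitB_recursion) (use p_range[of i] in \<open>auto simp: W_def waitB_eq_map_Suc\<close>)
  have lhs: "(\<Sum>\<tau>. (P i j (int t) - P i j (int t - int \<tau>)) * pmf Z \<tau>) = P i j (int t) - ?E"
    by (rule suminf_pmf_const_minus[where B=1]) (simp add: P_eq abs_ptransZ_le_1)
  have rhs: "(\<Sum>\<^sub>\<infinity>l. lam i * (pmf (H i) l * P l j (int t - 1)
                              - (if i = l then 1 else 0) * P l j (int t)))
      = lam i * (?h - P i j (int t))"
    by (rule infsum_pmf_minus_diagonal[where B=1]) (simp add: P_eq abs_ptransZ_le_1)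
  have "P i j (int t) - ?E - measure_pmf.prob Z {t<..} * of_bool (i = j)
      = lam i * (?h - P i j (int t)) + lam i * of_bool (i = j) * (if t = 0 then 1 else 0)"
    unfolding lam_def by (rule rearrange_first_jump_equation[OF _ rec]) (use p_range[of i] in simp)
  then show ?thesis
    unfolding lhs rhs P0 .
qed

end
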